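(* Let $\mathbf E$ be a real symmetric $3\times3$ matrix and $\hat{\mathbf e}\in\mathbb R^3$ with $|\hat{\mathbf e}|=1$. Let $\mathbf Q=-\mathbf I+2\hat{\mathbf e}\otimes\hat{\mathbf e}$, $\hat{\mathbf E}=\mathbf Q\mathbf E\mathbf Q^T$, suppose $\hat{\mathbf E}\ne\mathbf E$, and define $$\mathbf a=4\big((\hat{\mathbf e}\cdot\mathbf E\hat{\mathbf e})\hat{\mathbf e}-\mathbf E\hat{\mathbf e}\big),\qquad\mathbf n=\hat{\mathbf e}.$$ Then there exist $\mathbf b_f,\mathbf m_f\in\mathbb R^3$ with $$f\hat{\mathbf E}+(1-f)\mathbf E=\tfrac12(\mathbf b_f\otimes\mathbf m_f+\mathbf m_f\otimes\mathbf b_f)$$ for every $0\le f\le1$ if and only if (CCL1) the middle eigenvalue $\varepsilon_2$ of $\mathbf E$ is $0$ and $\mathrm{rank}\,\mathbf E=2$; (CCL2) $(\mathbf a\cdot\mathbf v_2)(\mathbf n\cdot\mathbf v_2)=0$, where $\mathbf E\mathbf v_2=0$, $|\mathbf v_2|=1$; (CCL3) $\big(\mathrm{tr}(\mathbf E+\hat{\mathbf E})\big)^2-\mathrm{tr}\big((\mathbf E+\hat{\mathbf E})^2\big)\le0$.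
   Context: $\mathbf a\otimes\mathbf n$ denotes the matrix $\mathbf x\mapsto(\mathbf n\cdot\mathbf x)\mathbf a$. *)

theory Defs
  imports "HOL-Analysis.Analysis"
begin

definition tensor :: "real^3 \<Rightarrow> real^3 \<Rightarrow> real^3^3" where
  "tensor a n = (\<chi> i j. a $ i * n $ j)"

definition middle_eigenvalue :: "real^3^3 \<Rightarrow> real \<Rightarrow> bool" where
  "middle_eigenvalue E \<mu> \<longleftrightarrow>
     (\<exists>v1 v2 v3 l1 l3.
        norm v1 = 1 \<and> norm v2 = 1 \<and> norm v3 = 1 \<and>
        v1 \<bullet> v2 = 0 \<and> v1 \<bullet> v3 = 0 \<and> v2 \<bullet> v3 = 0 \<and>
        E *v v1 = l1 *\<^sub>R v1 \<and> E *v v2 = \<mu> *\<^sub>R v2 \<and> E *v v3 = l3 *\<^sub>R v3 \<and>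
        l1 \<le> \<mu> \<and> \<mu> \<le> l3)"

end

theory Submission
  imports Defs
begin

text \<open>A symmetric \<open>3 \<times> 3\<close> matrix is a symmetrised tensor \<open>b \<odot> m\<close> iff it is singular and its
  second invariant \<open>\<sigma>\<^sub>2\<close> (the sum of its principal \<open>2 \<times> 2\<close> minors) is \<open>\<le> 0\<close>, i.e. iff its
  other two eigenvalues have weakly opposite signs.
  Since \<open>Q\<close> is a reflection, \<open>Eh = E + a \<odot> n\<close> with \<open>a \<perp> n\<close>, and \<open>det\<close> and \<open>\<sigma>\<^sub>2\<close> agree at the
  ends of the segment \<open>E + f (a \<odot> n)\<close>. Along it \<open>det\<close> is \<open>det E + f (1 - f) tr (adj E (a \<odot> n))\<close>
  and \<open>\<sigma>\<^sub>2\<close> is \<open>\<sigma>\<^sub>2 E + f (1 - f) |a|\<^sup>2 / 4\<close>, so the whole segment consists of symmetrised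
  tensors iff \<open>det E = 0\<close>, \<open>tr (adj E (a \<odot> n)) = 0\<close> and \<open>\<sigma>\<^sub>2\<close> is \<open>\<le> 0\<close> at the midpoint. The last
  condition is (CCL3) and forces \<open>\<sigma>\<^sub>2 E < 0\<close>, which together with \<open>det E = 0\<close> is (CCL1).
  Finally, for singular \<open>E\<close> with unit kernel vector \<open>v\<close> we have \<open>adj E = \<sigma>\<^sub>2(E) v v\<^sup>T\<close>, so the
  middle condition is (CCL2).\<close>

definition sym_tensor :: "real^3 \<Rightarrow> real^3 \<Rightarrow> real^3^3" where
  "sym_tensor b m = (1/2) *\<^sub>R (tensor b m + tensor m b)"

definition second_invariant :: "real^3^3 \<Rightarrow> real" where
  "second_invariant M = ((trace M)\<^sup>2 - trace (M ** M)) / 2"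

lemma inner_3: "(x::real^3) \<bullet> y = x$1 * y$1 + x$2 * y$2 + x$3 * y$3"
  by (simp add: inner_vec_def sum_3)

lemma trace_3: "trace (M::real^3^3) = M$1$1 + M$2$2 + M$3$3"
  by (simp add: trace_def sum_3)

lemma second_invariant_3:
  "second_invariant M = M$1$1 * M$2$2 - M$1$2 * M$2$1 + M$1$1 * M$3$3 - M$1$3 * M$3$1
     + M$2$2 * M$3$3 - M$2$3 * M$3$2"
  by (simp add: second_invariant_def trace_3 matrix_matrix_mult_def sum_3 power2_eq_square) algebra

lemma symmetric_entries_3:
  assumes "transpose (M::real^3^3) = M"
  shows "M$2$1 = M$1$2" "M$3$1 = M$1$3" "M$3$2 = M$2$3"
  using assms unfolding vec_eq_iff transpose_def by auto

lemma sym_tensor_nth: "sym_tensor b m $ i $ j = (b$i * m$j + m$i * b$j) / 2"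
  by (simp add: sym_tensor_def tensor_def)

lemma transpose_sym_tensor: "transpose (sym_tensor b m) = sym_tensor b m"
  by (simp add: vec_eq_iff transpose_def sym_tensor_nth algebra_simps)

lemma det_sym_tensor: "det (sym_tensor b m) = 0"
  by (simp add: det_3 sym_tensor_nth field_simps)

lemma second_invariant_sym_tensor:
  "second_invariant (sym_tensor b m) = ((b \<bullet> m)\<^sup>2 - (b \<bullet> b) * (m \<bullet> m)) / 4"
  by (simp add: second_invariant_3 sym_tensor_nth inner_3 power2_eq_square) algebra

lemma second_invariant_sym_tensor_nonpos: "second_invariant (sym_tensor b m) \<le> 0"
  using Cauchy_Schwarz_ineq[of b m] by (simp add: second_invariant_sym_tensor)

lemma second_invariant_sym_tensor_neg:
  assumes "a \<noteq> 0" "a \<bullet> e = 0" "norm e = 1"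
  shows "second_invariant (sym_tensor a e) < 0"
  using assms by (simp add: second_invariant_sym_tensor norm_eq_1)

lemma sym_tensor_zero_left: "sym_tensor 0 e = 0"
  by (simp add: sym_tensor_def tensor_def vec_eq_iff)

lemma inner_sym_tensor_mult: "v \<bullet> (sym_tensor b m *v v) = (b \<bullet> v) * (m \<bullet> v)"
  by (simp add: inner_3 matrix_vector_mult_def sum_3 sym_tensor_nth field_simps)

lemma sym_tensor_conj:
  fixes A :: "real^3^3"
  shows "A ** sym_tensor b m ** transpose A = sym_tensor (A *v b) (A *v m)"
  by (simp add: vec_eq_iff sym_tensor_nth matrix_matrix_mult_def matrix_vector_mult_def
      transpose_def sum_3 field_simps)

lemma second_invariant_scaleR: "second_invariant (c *\<^sub>R M) = c\<^sup>2 * second_invariant M"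
  by (simp add: second_invariant_3 power2_eq_square algebra_simps)

lemma orthogonal_matrix_cancel:
  fixes A X :: "real^'n^'n"
  assumes "orthogonal_matrix A"
  shows "transpose A ** A = mat 1" "A ** transpose A = mat 1"
    "transpose A ** (A ** X) = X" "A ** (transpose A ** X) = X"
    "transpose A *v (A *v y) = y" "A *v (transpose A *v y) = y"
  using assms unfolding orthogonal_matrix_def
  by (metis matrix_mul_assoc matrix_mul_lid matrix_vector_mul_assoc matrix_vector_mul_lid)+

lemma trace_orthogonal_conj:
  fixes A M :: "real^'n^'n"
  assumes "orthogonal_matrix A"
  shows "trace (A ** M ** transpose A) = trace M"
  using assms trace_mul_sym[of "A ** M" "transpose A"]
  by (simp add: orthogonal_matrix_def matrix_mul_assoc)

lemma second_invariant_orthogonal_conj: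
  fixes A M :: "real^3^3"
  assumes "orthogonal_matrix A"
  shows "second_invariant (A ** M ** transpose A) = second_invariant M"
proof -
  have "(A ** M ** transpose A) ** (A ** M ** transpose A) = A ** (M ** M) ** transpose A"
    using assms by (simp add: matrix_mul_assoc[symmetric] orthogonal_matrix_cancel)
  then show ?thesis
    using assms by (simp add: second_invariant_def trace_orthogonal_conj)
qed

lemma det_orthogonal_conj:
  fixes A M :: "real^'n^'n"
  assumes "orthogonal_matrix A"
  shows "det (A ** M ** transpose A) = det M"
  using det_orthogonal_matrix[OF assms] by (auto simp: det_mul det_transpose)

lemma inner_orthogonal_matrix_mult:
  fixes A :: "real^'n^'n"
  assumes "orthogonal_matrix A"
  shows "(A *v x) \<bullet> (A *v y) = x \<bullet> y"
  using assms dot_lmul_matrix[of x "transpose A" "A *v y"]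
  by (simp add: orthogonal_matrix_def matrix_vector_mul_assoc)

lemma norm_orthogonal_matrix_mult:
  fixes A :: "real^'n^'n"
  assumes "orthogonal_matrix A"
  shows "norm (A *v x) = norm x"
  by (simp add: norm_eq_sqrt_inner inner_orthogonal_matrix_mult[OF assms])

lemma orthogonal_conj_mult:
  fixes A N :: "real^'n^'n"
  assumes "orthogonal_matrix A"
  shows "(A ** N ** transpose A) *v (A *v y) = A *v (N *v y)"
  using assms by (simp only: matrix_vector_mul_assoc[symmetric] orthogonal_matrix_cancel)

lemma obtain_unit_kernel_vector:
  fixes M :: "real^'n^'n"
  assumes "det M = 0"
  obtains v where "M *v v = 0" "norm v = 1"
proof -
  obtain x where "x \<noteq> 0" "M *v x = 0"
    using assms matrix_nonfull_linear_equations_eq[of M] det_eq_0_rank[of M] by auto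
  then show thesis
    by (intro that[of "(1 / norm x) *\<^sub>R x"]) (simp_all add: matrix_vector_mult_scaleR)
qed

lemma symmetric_singular_block_form:
  fixes M :: "real^3^3"
  assumes sym: "transpose M = M" and sing: "det M = 0"
  obtains A N where "orthogonal_matrix A" "M = A ** N ** transpose A" "transpose N = N"
    "\<And>i. N $ i $ 3 = 0" "\<And>j. N $ 3 $ j = 0"
proof -
  obtain v where v: "M *v v = 0" "norm v = 1"
    using obtain_unit_kernel_vector[OF sing] .
  obtain A where A: "orthogonal_matrix A" "A *v axis 3 1 = v"
    using orthogonal_matrix_exists_basis[OF v(2)] .
  define N where "N = transpose A ** M ** A"
  have M: "M = A ** N ** transpose A"
    using A(1) by (simp add: N_def matrix_mul_assoc[symmetric] orthogonal_matrix_cancel)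
  have symN: "transpose N = N"
    by (simp add: N_def matrix_transpose_mul sym matrix_mul_assoc)
  have "column 3 N = 0"
    using v(1) A(2)
    by (simp add: N_def matrix_vector_mult_basis[symmetric] matrix_vector_mul_assoc[symmetric])
  then have col: "N $ i $ 3 = 0" for i
    by (simp add: column_def vec_eq_iff)
  have "N $ 3 $ j = 0" for j
    using col[of j] arg_cong[OF symN, of "\<lambda>X. X $ 3 $ j"] by (simp add: transpose_def)
  with A(1) M symN col show thesis
    by (rule that)
qed

lemma block_sym_tensor:
  fixes N :: "real^3^3"
  assumes sym: "transpose N = N" and col: "\<And>i. N $ i $ 3 = 0" and row: "\<And>j. N $ 3 $ j = 0"
    and inv: "second_invariant N \<le> 0"
  obtains b m where "N = sym_tensor b m"
proof -
  have s: "N$2$1 = N$1$2"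
    using symmetric_entries_3[OF sym] by simp
  have disc: "N$1$1 * N$2$2 - N$1$2 * N$1$2 \<le> 0"
    using inv s by (simp add: second_invariant_3 col row)
  show thesis
  proof (cases "N$1$1 = 0")
    case True
    show thesis
      by (rule that[of "vector [0, 1, 0]" "vector [2 * N$1$2, N$2$2, 0]"])
        (use col row s True in \<open>simp add: vec_eq_iff forall_3 sym_tensor_nth\<close>)
  next
    case False
    define D where "D = sqrt (N$1$2 * N$1$2 - N$1$1 * N$2$2)"
    have "D * D = N$1$2 * N$1$2 - N$1$1 * N$2$2"
      using disc by (simp add: D_def)
    then have "N$2$2 = (N$1$2 + D) * ((N$1$2 - D) / N$1$1)"
      using False by (simp add: field_simps)
    then have "N = sym_tensor (vector [N$1$1, N$1$2 + D, 0]) (vector [1, (N$1$2 - D) / N$1$1, 0])"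
      using col row s False by (simp add: vec_eq_iff forall_3 sym_tensor_nth)
    then show thesis
      by (rule that)
  qed
qed

lemma sym_tensor_iff:
  fixes M :: "real^3^3"
  assumes sym: "transpose M = M"
  shows "(\<exists>b m. M = sym_tensor b m) \<longleftrightarrow> det M = 0 \<and> second_invariant M \<le> 0"
proof
  assume "\<exists>b m. M = sym_tensor b m"
  then show "det M = 0 \<and> second_invariant M \<le> 0"
    using det_sym_tensor second_invariant_sym_tensor_nonpos by auto
next
  assume "det M = 0 \<and> second_invariant M \<le> 0"
  then have sing: "det M = 0" and inv: "second_invariant M \<le> 0" by auto
  obtain A N where A: "orthogonal_matrix A" and M: "M = A ** N ** transpose A"
    and N: "transpose N = N" "\<And>i. N $ i $ 3 = 0" "\<And>j. N $ 3 $ j = 0"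
    using symmetric_singular_block_form[OF sym sing] by blast
  have "second_invariant N \<le> 0"
    using inv by (simp add: M second_invariant_orthogonal_conj[OF A])
  then obtain b m where "N = sym_tensor b m"
    using block_sym_tensor[OF N] by blast
  then have "M = sym_tensor (A *v b) (A *v m)"
    by (simp add: M sym_tensor_conj)
  then show "\<exists>b m. M = sym_tensor b m" by blast
qed

lemma rank_ge_2_if_orthogonal_in_range:
  fixes M :: "real^'n^'m"
  assumes "x \<in> range ((*v) M)" "y \<in> range ((*v) M)" "x \<bullet> y = 0" "x \<noteq> 0" "y \<noteq> 0"
  shows "2 \<le> rank M"
proof -
  have "x \<noteq> y"
    using assms(3,4) by auto
  have "independent {x, y}"
    by (rule pairwise_orthogonal_independent)
      (use assms(3-5) in \<open>auto simp: pairwise_def orthogonal_def inner_commute\<close>)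
  then have "dim {x, y} = 2"
    using dim_eq_card_independent \<open>x \<noteq> y\<close> by fastforce
  moreover have "dim {x, y} \<le> dim (range ((*v) M))"
    using assms(1,2) by (intro dim_subset) auto
  ultimately show ?thesis
    by (simp add: rank_dim_range)
qed

lemma rank_le_1_if_range_in_line:
  fixes M :: "real^'n^'m"
  assumes "\<And>x. M *v x \<in> span {w}"
  shows "rank M \<le> 1"
proof -
  have "dim (range ((*v) M)) \<le> card {w}"
    using assms by (intro dim_le_card) auto
  then show ?thesis
    by (simp add: rank_dim_range)
qed

lemma quadratic_roots_of_negative_product:
  fixes s c :: real
  assumes "c < 0"
  obtains l1 l3 where "l1 + l3 = s" "l1 * l3 = c" "l1 < 0" "0 < l3"
proof -
  define D where "D = sqrt (s\<^sup>2 - 4 * c)"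
  have "0 \<le> s\<^sup>2 - 4 * c"
    using assms zero_le_power2[of s] by linarith
  then have "D * D = s\<^sup>2 - 4 * c" and "0 \<le> D"
    by (simp_all add: D_def)
  then have sum: "(s - D) / 2 + (s + D) / 2 = s" and prod: "(s - D) / 2 * ((s + D) / 2) = c"
    and "(s - D) / 2 \<le> (s + D) / 2"
    by (simp_all add: field_simps power2_eq_square)
  then have "(s - D) / 2 < 0" "0 < (s + D) / 2"
    using assms by (smt (verit) mult_nonneg_nonneg mult_nonpos_nonpos)+
  with sum prod show thesis
    by (rule that)
qed

lemma block_opposite_eigenvectors:
  fixes N :: "real^3^3"
  assumes sym: "transpose N = N" and col: "\<And>i. N $ i $ 3 = 0" and row: "\<And>j. N $ 3 $ j = 0"
    and inv: "second_invariant N < 0"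
  obtains y1 y3 l1 l3 where "norm y1 = 1" "norm y3 = 1" "y1 \<bullet> y3 = 0" "y1 $ 3 = 0" "y3 $ 3 = 0"
    "N *v y1 = l1 *\<^sub>R y1" "N *v y3 = l3 *\<^sub>R y3" "l1 < 0" "0 < l3"
proof -
  define p q r where "p = N$1$1" and "q = N$1$2" and "r = N$2$2"
  have Nv: "N *v y = vector [p * y$1 + q * y$2, q * y$1 + r * y$2, 0]" for y
    using col row symmetric_entries_3[OF sym]
    by (simp add: vec_eq_iff forall_3 matrix_vector_mult_def sum_3 p_def q_def r_def)
  have disc: "p * r - q * q < 0"
    using inv symmetric_entries_3[OF sym] by (simp add: second_invariant_3 col row p_def q_def r_def)
  have "\<exists>w1 w3 l1 l3. w1 \<noteq> 0 \<and> w3 \<noteq> 0 \<and> w1 \<bullet> w3 = 0 \<and> w1 $ 3 = 0 \<and> w3 $ 3 = 0 \<and>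
      N *v w1 = l1 *\<^sub>R w1 \<and> N *v w3 = l3 *\<^sub>R w3 \<and> l1 < 0 \<and> 0 < l3"
  proof (cases "q = 0")
    case True
    have e1: "N *v vector [1, 0, 0] = p *\<^sub>R vector [1, 0, 0]"
      and e2: "N *v vector [0, 1, 0] = r *\<^sub>R vector [0, 1, 0]"
      by (simp_all add: Nv True vec_eq_iff forall_3)
    have "p * r < 0"
      using disc True by simp
    then consider "p < 0" "0 < r" | "r < 0" "0 < p"
      by (auto simp: mult_less_0_iff)
    then show ?thesis
    proof cases
      case 1
      then show ?thesis
        using e1 e2 by (intro exI[of _ "vector [1, 0, 0]"] exI[of _ "vector [0, 1, 0]"] exI[of _ p]
            exI[of _ r]) (simp add: vec_eq_iff forall_3 inner_3)
    next
      case 2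
      then show ?thesis
        using e1 e2 by (intro exI[of _ "vector [0, 1, 0]"] exI[of _ "vector [1, 0, 0]"] exI[of _ r]
            exI[of _ p]) (simp add: vec_eq_iff forall_3 inner_3)
    qed
  next
    case False
    obtain l1 l3 where sum: "l1 + l3 = p + r" and prod: "l1 * l3 = p * r - q * q"
      and signs: "l1 < 0" "0 < l3"
      using quadratic_roots_of_negative_product[OF disc] .
    have "N *v vector [q, l - p, 0] = l *\<^sub>R vector [q, l - p, 0]" if "l = l1 \<or> l = l3" for l
    proof -
      have "l * l - (p + r) * l + (p * r - q * q) = (l - l1) * (l - l3)"
        unfolding sum[symmetric] prod[symmetric] by (simp add: algebra_simps)
      then have "l * l - (p + r) * l + (p * r - q * q) = 0"
        using that by auto
      then show ?thesis
        by (simp add: Nv vec_eq_iff forall_3 algebra_simps)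
    qed
    moreover have "(l1 - p) * (l3 - p) = l1 * l3 - p * (l1 + l3) + p * p"
      by (simp add: algebra_simps)
    then have "(vector [q, l1 - p, 0] :: real^3) \<bullet> vector [q, l3 - p, 0] = 0"
      using sum prod by (simp add: inner_3 algebra_simps)
    moreover have "(vector [q, l - p, 0] :: real^3) \<noteq> 0" for l
      using False by (simp add: vec_eq_iff forall_3)
    ultimately show ?thesis
      using signs by (intro exI[of _ "vector [q, l1 - p, 0]"] exI[of _ "vector [q, l3 - p, 0]"]
          exI[of _ l1] exI[of _ l3]) simp
  qed
  then obtain w1 w3 l1 l3 where w: "w1 \<noteq> 0" "w3 \<noteq> 0" "w1 \<bullet> w3 = 0" "w1 $ 3 = 0" "w3 $ 3 = 0"
      "N *v w1 = l1 *\<^sub>R w1" "N *v w3 = l3 *\<^sub>R w3" "l1 < 0" "0 < l3"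
    by blast
  show thesis
    by (rule that[of "(1 / norm w1) *\<^sub>R w1" "(1 / norm w3) *\<^sub>R w3" l1 l3])
      (use w in \<open>simp_all add: matrix_vector_mult_scaleR\<close>)
qed

lemma matrix_conj_transpose_nth:
  fixes R M :: "real^3^3"
  shows "(R ** M ** transpose R) $ i $ j = R $ i \<bullet> (M *v R $ j)"
  by (simp add: matrix_matrix_mult_def matrix_vector_mult_def transpose_def inner_3 sum_3
      algebra_simps)

lemma orthogonal_matrix_of_orthonormal_rows:
  fixes v1 v2 v3 :: "real^3"
  assumes "norm v1 = 1" "norm v2 = 1" "norm v3 = 1" "v1 \<bullet> v2 = 0" "v1 \<bullet> v3 = 0" "v2 \<bullet> v3 = 0"
  shows "orthogonal_matrix (vector [v1, v2, v3] :: real^3^3)"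
  unfolding orthogonal_matrix_orthonormal_rows
  using assms by (auto simp: forall_3 row_def orthogonal_def inner_commute)

lemma orthonormal_eigenvectors_diagonalise:
  fixes M :: "real^3^3"
  assumes unit: "norm v1 = 1" "norm v2 = 1" "norm v3 = 1"
    and orth: "v1 \<bullet> v2 = 0" "v1 \<bullet> v3 = 0" "v2 \<bullet> v3 = 0"
    and eig: "M *v v1 = l1 *\<^sub>R v1" "M *v v2 = l2 *\<^sub>R v2" "M *v v3 = l3 *\<^sub>R v3"
  obtains A where "orthogonal_matrix A"
    "M = A ** vector [vector [l1, 0, 0], vector [0, l2, 0], vector [0, 0, l3]] ** transpose A"
proof -
  define R :: "real^3^3" where "R = vector [v1, v2, v3]"
  have R: "orthogonal_matrix (transpose R)"
    unfolding R_def orthogonal_matrix_transpose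
    using unit orth by (rule orthogonal_matrix_of_orthonormal_rows)
  have "M = transpose R ** (R ** M ** transpose R) ** R"
    using orthogonal_matrix_cancel[of R] R by (simp add: matrix_mul_assoc[symmetric])
  also have "R ** M ** transpose R = vector [vector [l1, 0, 0], vector [0, l2, 0], vector [0, 0, l3]]"
    using unit orth
    by (simp add: vec_eq_iff forall_3 matrix_conj_transpose_nth R_def eig inner_commute norm_eq_1)
  finally show thesis
    using R by (intro that[of "transpose R"]) simp_all
qed

lemma singular_indefinite_if_middle_eigenvalue_zero:
  fixes M :: "real^3^3"
  assumes mid: "middle_eigenvalue M 0" and rk: "rank M = 2"
  shows "det M = 0 \<and> second_invariant M < 0"
proof -
  obtain v1 v2 v3 l1 l3 where unit: "norm v1 = 1" "norm v2 = 1" "norm v3 = 1"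
    and orth: "v1 \<bullet> v2 = 0" "v1 \<bullet> v3 = 0" "v2 \<bullet> v3 = 0"
    and eig: "M *v v1 = l1 *\<^sub>R v1" "M *v v2 = 0 *\<^sub>R v2" "M *v v3 = l3 *\<^sub>R v3"
    and "l1 \<le> 0" "0 \<le> l3"
    using mid unfolding middle_eigenvalue_def by blast
  define D :: "real^3^3" where "D = vector [vector [l1, 0, 0], vector [0, 0, 0], vector [0, 0, l3]]"
  obtain A where A: "orthogonal_matrix A" and M: "M = A ** D ** transpose A"
    using orthonormal_eigenvectors_diagonalise[OF unit orth eig] unfolding D_def .
  have "det M = det D" and "second_invariant M = second_invariant D"
    by (simp_all add: M det_orthogonal_conj[OF A] second_invariant_orthogonal_conj[OF A])
  then have inv: "det M = 0" "second_invariant M = l1 * l3"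
    by (simp_all add: D_def det_3 second_invariant_3)
  have "rank M \<le> rank D"
    using rank_mul_le_left[of "A ** D" "transpose A"] rank_mul_le_right[of A D]
    by (simp add: M)
  then have "1 < rank D"
    using rk by simp
  have "l1 \<noteq> 0"
  proof
    assume "l1 = 0"
    then have "D *v x = (l3 * x $ 3) *\<^sub>R vector [0, 0, 1]" for x
      by (simp add: D_def vec_eq_iff forall_3 matrix_vector_mult_def sum_3)
    then have "rank D \<le> 1"
      by (intro rank_le_1_if_range_in_line[of _ "vector [0, 0, 1]"]) (simp add: span_base span_mul)
    with \<open>1 < rank D\<close> show False by simp
  qed
  moreover have "l3 \<noteq> 0"
  proof
    assume "l3 = 0"
    then have "D *v x = (l1 * x $ 1) *\<^sub>R vector [1, 0, 0]" for x
      by (simp add: D_def vec_eq_iff forall_3 matrix_vector_mult_def sum_3)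
    then have "rank D \<le> 1"
      by (intro rank_le_1_if_range_in_line[of _ "vector [1, 0, 0]"]) (simp add: span_base span_mul)
    with \<open>1 < rank D\<close> show False by simp
  qed
  ultimately have "l1 * l3 < 0"
    using \<open>l1 \<le> 0\<close> \<open>0 \<le> l3\<close> by (simp add: mult_neg_pos)
  with inv show ?thesis
    by simp
qed

lemma middle_eigenvalue_zero_if_singular_indefinite:
  fixes M :: "real^3^3"
  assumes sym: "transpose M = M" and sing: "det M = 0" and inv: "second_invariant M < 0"
  shows "middle_eigenvalue M 0 \<and> rank M = 2"
proof -
  obtain A N where A: "orthogonal_matrix A" and M: "M = A ** N ** transpose A"
    and N: "transpose N = N" "\<And>i. N $ i $ 3 = 0" "\<And>j. N $ 3 $ j = 0"
    using symmetric_singular_block_form[OF sym sing] by blast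
  have "second_invariant N < 0"
    using inv by (simp add: M second_invariant_orthogonal_conj[OF A])
  then obtain y1 y3 l1 l3 where y: "norm y1 = 1" "norm y3 = 1" "y1 \<bullet> y3 = 0" "y1 $ 3 = 0" "y3 $ 3 = 0"
      and eig: "N *v y1 = l1 *\<^sub>R y1" "N *v y3 = l3 *\<^sub>R y3" and l: "l1 < 0" "0 < l3"
    using block_opposite_eigenvectors[OF N] by blast
  define y2 :: "real^3" where "y2 = vector [0, 0, 1]"
  have y2: "N *v y2 = 0" "norm y2 = 1" "y1 \<bullet> y2 = 0" "y2 \<bullet> y3 = 0"
    using N(2) y(4,5) by (simp_all add: y2_def vec_eq_iff forall_3 matrix_vector_mult_def sum_3
        inner_3 norm_eq_sqrt_inner)
  have Mv: "M *v (A *v y) = A *v (N *v y)" for y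
    unfolding M by (rule orthogonal_conj_mult[OF A])
  note inner_A = inner_orthogonal_matrix_mult[OF A] and norm_A = norm_orthogonal_matrix_mult[OF A]
  have "middle_eigenvalue M 0"
    unfolding middle_eigenvalue_def
    using y y2 l eig
    by (intro exI[of _ "A *v y1"] exI[of _ "A *v y2"] exI[of _ "A *v y3"] exI[of _ l1] exI[of _ l3])
      (simp add: Mv inner_A norm_A matrix_vector_mult_scaleR)
  moreover have "rank M \<le> 2"
    using sing det_eq_0_rank[of M] by simp
  moreover have "2 \<le> rank M"
  proof (rule rank_ge_2_if_orthogonal_in_range)
    have "A *v y1 = M *v (A *v ((1 / l1) *\<^sub>R y1))" "A *v y3 = M *v (A *v ((1 / l3) *\<^sub>R y3))"
      using eig l by (simp_all add: Mv matrix_vector_mult_scaleR)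
    then show "A *v y1 \<in> range ((*v) M)" "A *v y3 \<in> range ((*v) M)"
      by (blast intro: range_eqI)+
    show "(A *v y1) \<bullet> (A *v y3) = 0"
      by (simp add: inner_A y(3))
    show "A *v y1 \<noteq> 0" "A *v y3 \<noteq> 0"
      using norm_A[of y1] norm_A[of y3] y(1,2) by auto
  qed
  ultimately show ?thesis
    by simp
qed

lemma middle_eigenvalue_zero_rank_2_iff:
  fixes M :: "real^3^3"
  assumes "transpose M = M"
  shows "middle_eigenvalue M 0 \<and> rank M = 2 \<longleftrightarrow> det M = 0 \<and> second_invariant M < 0"
  using assms middle_eigenvalue_zero_if_singular_indefinite singular_indefinite_if_middle_eigenvalue_zero
  by blast

text \<open>Only the upper triangles are read: for symmetric \<open>E\<close>, \<open>S\<close> this is \<open>trace (adj E ** S)\<close>,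
  the coefficient of \<open>f\<close> in \<open>det (E + f S)\<close>.\<close>

definition mixed_det :: "real^3^3 \<Rightarrow> real^3^3 \<Rightarrow> real" where
  "mixed_det E S = S$1$1 * (E$2$2 * E$3$3 - E$2$3 * E$2$3) + S$2$2 * (E$1$1 * E$3$3 - E$1$3 * E$1$3)
    + S$3$3 * (E$1$1 * E$2$2 - E$1$2 * E$1$2) + 2 * S$1$2 * (E$1$3 * E$2$3 - E$1$2 * E$3$3)
    + 2 * S$1$3 * (E$1$2 * E$2$3 - E$1$3 * E$2$2) + 2 * S$2$3 * (E$1$2 * E$1$3 - E$1$1 * E$2$3)"

lemma det_add_scaleR:
  fixes E S :: "real^3^3"
  assumes "transpose E = E" "transpose S = S"
  shows "det (E + f *\<^sub>R S) = det E + f * mixed_det E S + f\<^sup>2 * mixed_det S E + f ^ 3 * det S"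
  using symmetric_entries_3[OF assms(1)] symmetric_entries_3[OF assms(2)]
  by (simp add: det_3 mixed_det_def power2_eq_square power3_eq_cube algebra_simps)

lemma second_invariant_add_scaleR:
  "second_invariant (E + f *\<^sub>R S)
     = second_invariant E + f * (second_invariant (E + S) - second_invariant E - second_invariant S)
       + f\<^sup>2 * second_invariant S"
  by (simp add: second_invariant_3 power2_eq_square) algebra

lemma mixed_det_kernel:
  fixes E S :: "real^3^3"
  assumes symE: "transpose E = E" and symS: "transpose S = S" and v: "E *v v = 0" "norm v = 1"
  shows "mixed_det E S = second_invariant E * (v \<bullet> (S *v v))"
proof -
  have "E$1$1 * v$1 + E$1$2 * v$2 + E$1$3 * v$3 = 0" "E$1$2 * v$1 + E$2$2 * v$2 + E$2$3 * v$3 = 0"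
    "E$1$3 * v$1 + E$2$3 * v$2 + E$3$3 * v$3 = 0"
    using v(1) symmetric_entries_3[OF symE]
    by (simp_all add: vec_eq_iff forall_3 matrix_vector_mult_def sum_3)
  moreover have "v$1 * v$1 + v$2 * v$2 + v$3 * v$3 = 1"
    using v(2) by (simp add: norm_eq_1 inner_3)
  ultimately show ?thesis
    using symmetric_entries_3[OF symE] symmetric_entries_3[OF symS]
    by (simp add: mixed_det_def second_invariant_3 inner_3 matrix_vector_mult_def sum_3) algebra
qed

lemma mixed_det_eq_0_iff_kernel:
  fixes E S :: "real^3^3"
  assumes symE: "transpose E = E" and symS: "transpose S = S"
    and sing: "det E = 0" and inv: "second_invariant E \<noteq> 0"
  shows "mixed_det E S = 0 \<longleftrightarrow> (\<forall>v. E *v v = 0 \<and> norm v = 1 \<longrightarrow> v \<bullet> (S *v v) = 0)"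
proof
  assume "mixed_det E S = 0"
  then show "\<forall>v. E *v v = 0 \<and> norm v = 1 \<longrightarrow> v \<bullet> (S *v v) = 0"
    using inv mixed_det_kernel[OF symE symS] by auto
next
  assume "\<forall>v. E *v v = 0 \<and> norm v = 1 \<longrightarrow> v \<bullet> (S *v v) = 0"
  moreover obtain v where "E *v v = 0" "norm v = 1"
    using obtain_unit_kernel_vector[OF sing] .
  ultimately show "mixed_det E S = 0"
    using mixed_det_kernel[OF symE symS] by simp
qed

lemma second_invariant_segment:
  assumes "second_invariant (E + S) = second_invariant E"
  shows "second_invariant (E + f *\<^sub>R S) = second_invariant E + (f\<^sup>2 - f) * second_invariant S"
  using second_invariant_add_scaleR[of E f S] assms by (simp add: algebra_simps)

lemma segment_sym_tensor_iff:
  fixes E S :: "real^3^3"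
  assumes symE: "transpose E = E" and symS: "transpose S = S" and singS: "det S = 0"
    and det_end: "det (E + S) = det E" and inv_end: "second_invariant (E + S) = second_invariant E"
    and invS: "second_invariant S < 0"
  shows "(\<forall>f. 0 \<le> f \<and> f \<le> 1 \<longrightarrow> (\<exists>b m. E + f *\<^sub>R S = sym_tensor b m)) \<longleftrightarrow>
    det E = 0 \<and> mixed_det E S = 0 \<and> second_invariant (E + (1/2) *\<^sub>R S) \<le> 0"
proof -
  have "mixed_det S E = - mixed_det E S"
    using det_add_scaleR[OF symE symS, of 1] det_end singS by simp
  then have det: "det (E + f *\<^sub>R S) = det E + (f - f\<^sup>2) * mixed_det E S" for f
    using det_add_scaleR[OF symE symS, of f] singS by (simp add: algebra_simps)
  have inv: "second_invariant (E + f *\<^sub>R S)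
      = second_invariant (E + (1/2) *\<^sub>R S) + (f - 1/2)\<^sup>2 * second_invariant S" for f
    using second_invariant_segment[OF inv_end, of f] second_invariant_segment[OF inv_end, of "1/2"]
    by (simp add: power2_eq_square algebra_simps)
  have sym: "transpose (E + f *\<^sub>R S) = E + f *\<^sub>R S" for f
    using symE symS by (simp add: transpose_def vec_eq_iff)
  have seg: "(\<exists>b m. E + f *\<^sub>R S = sym_tensor b m) \<longleftrightarrow>
      det E + (f - f\<^sup>2) * mixed_det E S = 0 \<and>
      second_invariant (E + (1/2) *\<^sub>R S) + (f - 1/2)\<^sup>2 * second_invariant S \<le> 0" for f
    unfolding sym_tensor_iff[OF sym] det[of f] inv[of f] ..
  show ?thesis
  proof
    assume H: "\<forall>f. 0 \<le> f \<and> f \<le> 1 \<longrightarrow> (\<exists>b m. E + f *\<^sub>R S = sym_tensor b m)"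
    from H[rule_format, of 0] H[rule_format, of "1/2"]
    show "det E = 0 \<and> mixed_det E S = 0 \<and> second_invariant (E + (1/2) *\<^sub>R S) \<le> 0"
      unfolding seg by (simp add: power2_eq_square)
  next
    assume mid: "det E = 0 \<and> mixed_det E S = 0 \<and> second_invariant (E + (1/2) *\<^sub>R S) \<le> 0"
    have "(f - 1/2)\<^sup>2 * second_invariant S \<le> 0" for f
      using invS by (simp add: mult_nonneg_nonpos)
    with mid have "\<exists>b m. E + f *\<^sub>R S = sym_tensor b m" for f
      unfolding seg by (simp add: add_nonpos_nonpos)
    then show "\<forall>f. 0 \<le> f \<and> f \<le> 1 \<longrightarrow> (\<exists>b m. E + f *\<^sub>R S = sym_tensor b m)"
      by blast
  qed
qed

lemma reflection_orthogonal_matrix: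
  fixes e :: "real^3"
  assumes "norm e = 1"
  shows "orthogonal_matrix (- mat 1 + 2 *\<^sub>R tensor e e)"
proof -
  obtain x y z where e: "e$1 = x" "e$2 = y" "e$3 = z" by blast
  have "x * x + y * y + z * z = 1"
    using assms e by (simp add: norm_eq_1 inner_3)
  then show ?thesis
    unfolding orthogonal_matrix
    by (simp add: vec_eq_iff forall_3 matrix_matrix_mult_def sum_3 transpose_def tensor_def mat_def e)
      algebra
qed

lemma reflection_conj:
  fixes E :: "real^3^3" and e :: "real^3"
  assumes "transpose E = E"
  shows "(- mat 1 + 2 *\<^sub>R tensor e e) ** E ** transpose (- mat 1 + 2 *\<^sub>R tensor e e)
     = E + sym_tensor (4 *\<^sub>R ((e \<bullet> (E *v e)) *\<^sub>R e - E *v e)) e"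
proof -
  obtain x y z where e: "e$1 = x" "e$2 = y" "e$3 = z" by blast
  obtain p q r s t u
    where E: "E$1$1 = p" "E$1$2 = q" "E$1$3 = r" "E$2$2 = s" "E$2$3 = t" "E$3$3 = u" by blast
  have E': "E$2$1 = q" "E$3$1 = r" "E$3$2 = t"
    using symmetric_entries_3[OF assms] E by simp_all
  show ?thesis
    by (simp add: vec_eq_iff forall_3 matrix_conj_transpose_nth inner_3 sym_tensor_nth
        matrix_vector_mult_def sum_3 tensor_def mat_def e E E') algebra
qed

theorem theorem4:
  fixes E :: "real^3^3" and e :: "real^3"
  assumes symE: "transpose E = E"
    and unit: "norm e = 1"
    and Q_def: "Q = - mat 1 + 2 *\<^sub>R tensor e e"
    and hatE: "Eh = Q ** E ** transpose Q"
    and ne: "Eh \<noteq> E"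
    and a_def: "a = 4 *\<^sub>R ((e \<bullet> (E *v e)) *\<^sub>R e - E *v e)"
    and n_def: "n = e"
  shows "(\<forall>f::real. 0 \<le> f \<and> f \<le> 1 \<longrightarrow>
            (\<exists>b m :: real^3. f *\<^sub>R Eh + (1 - f) *\<^sub>R E = (1/2) *\<^sub>R (tensor b m + tensor m b)))
         \<longleftrightarrow>
         ((middle_eigenvalue E 0 \<and> rank E = 2) \<and>
          (\<forall>v2. E *v v2 = 0 \<and> norm v2 = 1 \<longrightarrow> (a \<bullet> v2) * (n \<bullet> v2) = 0) \<and>
          (trace (E + Eh))\<^sup>2 - trace ((E + Eh) ** (E + Eh)) \<le> 0)"
proof -
  define S where "S = sym_tensor a e"
  have symS: "transpose S = S" and singS: "det S = 0"
    by (simp_all add: S_def transpose_sym_tensor det_sym_tensor)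
  have Q: "orthogonal_matrix Q"
    unfolding Q_def using unit by (rule reflection_orthogonal_matrix)
  have Eh: "Eh = E + S"
    unfolding hatE Q_def a_def S_def by (rule reflection_conj[OF symE])
  have "a \<noteq> 0"
    using ne by (auto simp: Eh S_def sym_tensor_zero_left)
  moreover have "a \<bullet> e = 0"
    using unit by (simp add: a_def inner_diff_left inner_commute[of "E *v e"] norm_eq_1)
  ultimately have invS: "second_invariant S < 0"
    unfolding S_def using unit by (rule second_invariant_sym_tensor_neg)
  have ends: "det (E + S) = det E" "second_invariant (E + S) = second_invariant E"
    using det_orthogonal_conj[OF Q] second_invariant_orthogonal_conj[OF Q] by (simp_all add: hatE flip: Eh)
  have segment: "f *\<^sub>R Eh + (1 - f) *\<^sub>R E = E + f *\<^sub>R S" for f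
    by (simp add: Eh algebra_simps)
  have "E + Eh = 2 *\<^sub>R (E + (1/2) *\<^sub>R S)"
    by (simp add: Eh algebra_simps scaleR_2)
  then have midpoint: "(trace (E + Eh))\<^sup>2 - trace ((E + Eh) ** (E + Eh))
      = 8 * second_invariant (E + (1/2) *\<^sub>R S)"
    using second_invariant_def[of "E + Eh"] by (simp add: second_invariant_scaleR)
  have "second_invariant (E + (1/2) *\<^sub>R S) \<le> 0 \<Longrightarrow> second_invariant E < 0"
    using second_invariant_segment[OF ends(2), of "1/2"] invS by (simp add: power2_eq_square)
  moreover have "det E = 0 \<Longrightarrow> second_invariant E < 0 \<Longrightarrow> mixed_det E S = 0 \<longleftrightarrow>
      (\<forall>v2. E *v v2 = 0 \<and> norm v2 = 1 \<longrightarrow> (a \<bullet> v2) * (n \<bullet> v2) = 0)"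
    using mixed_det_eq_0_iff_kernel[OF symE symS] by (simp add: S_def inner_sym_tensor_mult n_def)
  ultimately show ?thesis
    unfolding segment sym_tensor_def[symmetric] segment_sym_tensor_iff[OF symE symS singS ends invS]
      middle_eigenvalue_zero_rank_2_iff[OF symE] midpoint
    by auto
qed

end
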